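(* For $k\ge 2$, the number of minimal unavoidable subsets of $\overline{S_k}$ is at most $\binom{k!}{k!/2}$.
   Context: For $\sigma\in S_n$, the cyclic permutation $[\sigma]$ is the set of all rotations of $\sigma$. For $\pi\in S_k$, the totally vincular pattern $\overline{\pi}$ is $\pi$ with all adjacent positions overlined; a cyclic permutation $[\sigma]$ of length $n\ge k$ contains $\overline{\pi}$ if some $k$ cyclically consecutive entries of $\sigma$ are order-isomorphic to $\pi$. $\overline{S_k}$ is the set of totally vincular patterns of length $k$. For $\Pi\subseteq\overline{S_k}$, $\mathrm{Av}_n[\Pi]$ is the set of cyclic permutations of length $n$ containing no pattern of $\Pi$. $\Pi$ is unavoidable if $|\mathrm{Av}_n[\Pi]|=0$ for all sufficiently large $n$, avoidable otherwise; it is minimal unavoidable if it is unavoidable and every proper subset is avoidable. *)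

theory Defs
  imports Main
begin

definition perms :: "nat \<Rightarrow> nat list set" where
  "perms n = {\<sigma>. distinct \<sigma> \<and> set \<sigma> = {1..n}}"

text \<open>The cyclic permutation [sigma]: the set of all rotations of sigma.\<close>
definition cyc_class :: "nat list \<Rightarrow> nat list set" where
  "cyc_class \<sigma> = {rotate i \<sigma> | i. i < length \<sigma>}"

definition order_iso :: "nat list \<Rightarrow> nat list \<Rightarrow> bool" where
  "order_iso xs ys \<longleftrightarrow> length xs = length ys \<and>
     (\<forall>i < length xs. \<forall>j < length xs. xs ! i < xs ! j \<longleftrightarrow> ys ! i < ys ! j)"

definition cyc_window :: "nat list \<Rightarrow> nat \<Rightarrow> nat \<Rightarrow> nat list" where
  "cyc_window \<sigma> i k = map (\<lambda>j. \<sigma> ! ((i + j) mod length \<sigma>)) [0..<k]"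

text \<open>[sigma] contains the totally vincular pattern overline(pi).\<close>
definition cyc_contains :: "nat list \<Rightarrow> nat list \<Rightarrow> bool" where
  "cyc_contains \<sigma> \<pi> \<longleftrightarrow> length \<pi> \<le> length \<sigma> \<and>
     (\<exists>i < length \<sigma>. order_iso (cyc_window \<sigma> i (length \<pi>)) \<pi>)"

definition Av :: "nat \<Rightarrow> nat list set \<Rightarrow> nat list set set" where
  "Av n \<Pi> = {cyc_class \<sigma> | \<sigma>. \<sigma> \<in> perms n \<and> (\<forall>\<pi> \<in> \<Pi>. \<not> cyc_contains \<sigma> \<pi>)}"

definition unavoidable :: "nat list set \<Rightarrow> bool" where
  "unavoidable \<Pi> \<longleftrightarrow> (\<exists>N. \<forall>n \<ge> N. card (Av n \<Pi>) = 0)"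

text \<open>Minimal unavoidable subsets of overline(S_k) (patterns identified with pi in S_k).\<close>
definition minimal_unavoidable :: "nat \<Rightarrow> nat list set \<Rightarrow> bool" where
  "minimal_unavoidable k \<Pi> \<longleftrightarrow> \<Pi> \<subseteq> perms k \<and> unavoidable \<Pi> \<and>
     (\<forall>\<Pi>'. \<Pi>' \<subset> \<Pi> \<longrightarrow> \<not> unavoidable \<Pi>')"

end

theory Submission
  imports Defs "HOL.Binomial_Plus" "HOL-Combinatorics.Multiset_Permutations"
begin

text \<open>No minimal unavoidable set contains another, so they form an antichain in the power set of
  the k! patterns, and Sperner's theorem applies. Sperner's bound is proved by the
  Lubell counting: a set A claims the |A|! (n - |A|)! orderings of the ground set that list A
  first; for an antichain these classes are disjoint, and each has at least
  n! / (n choose n div 2) members.\<close>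

no_syntax \<comment> \<open>frees \<Pi>, a variable of the statement\<close>
  "_Pi" :: "pttrn \<Rightarrow> 'a set \<Rightarrow> 'b set \<Rightarrow> ('a \<Rightarrow> 'b) set"
    (\<open>(\<open>indent=3 notation=\<open>binder \<Pi>\<in>\<close>\<close>\<Pi> _\<in>_./ _)\<close> 10)

definition permutations_listing_first :: "'a set \<Rightarrow> 'a set \<Rightarrow> 'a list set" where
  "permutations_listing_first S A = {xs \<in> permutations_of_set S. set (take (card A) xs) = A}"

lemma permutations_listing_first_eq_append_image:
  assumes "A \<subseteq> S"
  shows "permutations_listing_first S A =
           (\<lambda>(u, v). u @ v) ` (permutations_of_set A \<times> permutations_of_set (S - A))"
proof (rule set_eqI, rule iffI)
  fix xs assume "xs \<in> permutations_listing_first S A"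
  then have xs: "distinct xs" "set xs = S" "set (take (card A) xs) = A"
    by (auto simp: permutations_listing_first_def permutations_of_set_def)
  have "set (drop (card A) xs) = S - A"
  proof -
    have "set (take (card A) xs) \<inter> set (drop (card A) xs) = {}"
      using xs(1) by (metis append_take_drop_id distinct_append)
    moreover have "set (take (card A) xs) \<union> set (drop (card A) xs) = S"
      using xs(2) by (metis append_take_drop_id set_append)
    ultimately show ?thesis using xs(3) by blast
  qed
  with xs show "xs \<in> (\<lambda>(u, v). u @ v) ` (permutations_of_set A \<times> permutations_of_set (S - A))"
    by (intro image_eqI[of _ _ "(take (card A) xs, drop (card A) xs)"])
       (auto simp: permutations_of_set_def)
next
  fix xs assume "xs \<in> (\<lambda>(u, v). u @ v) ` (permutations_of_set A \<times> permutations_of_set (S - A))"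
  then obtain u v where "xs = u @ v" "u \<in> permutations_of_set A" "v \<in> permutations_of_set (S - A)"
    by auto
  moreover from \<open>u \<in> permutations_of_set A\<close> have "length u = card A"
    by (rule length_finite_permutations_of_set)
  ultimately show "xs \<in> permutations_listing_first S A"
    using assms by (auto simp: permutations_listing_first_def permutations_of_set_def)
qed

lemma card_permutations_listing_first:
  assumes "finite S" and "A \<subseteq> S"
  shows "card (permutations_listing_first S A) = fact (card A) * fact (card S - card A)"
proof -
  have "finite A" using assms finite_subset by blast
  have "inj_on (\<lambda>(u, v). u @ v) (permutations_of_set A \<times> permutations_of_set (S - A))"
    by (rule inj_onI) (auto simp: append_eq_append_conv dest!: length_finite_permutations_of_set)
  then have "card (permutations_listing_first S A) =
               card (permutations_of_set A) * card (permutations_of_set (S - A))"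
    by (simp add: permutations_listing_first_eq_append_image[OF assms(2)] card_image
        card_cartesian_product)
  then show ?thesis
    using assms \<open>finite A\<close> by (simp add: card_Diff_subset)
qed

lemma permutations_listing_first_disjoint:
  assumes "\<not> A \<subseteq> B" and "\<not> B \<subseteq> A"
  shows "permutations_listing_first S A \<inter> permutations_listing_first S B = {}"
proof (rule ccontr)
  assume "permutations_listing_first S A \<inter> permutations_listing_first S B \<noteq> {}"
  then obtain xs where "set (take (card A) xs) = A" "set (take (card B) xs) = B"
    by (auto simp: permutations_listing_first_def)
  then have "A \<subseteq> B \<or> B \<subseteq> A"
    by (metis nat_le_linear set_take_subset_set_take)
  with assms show False by blast
qed

lemma fact_le_middle_binomial_mult_card_permutations_listing_first:
  assumes "finite S" and "A \<subseteq> S"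
  shows "fact (card S) \<le> (card S choose (card S div 2)) * card (permutations_listing_first S A)"
proof -
  have "card A \<le> card S" using assms by (rule card_mono)
  then have "fact (card S) = (card S choose card A) * card (permutations_listing_first S A)"
    by (metis binomial_fact_lemma card_permutations_listing_first[OF assms] mult.commute)
  also have "\<dots> \<le> (card S choose (card S div 2)) * card (permutations_listing_first S A)"
    by (rule mult_le_mono1[OF binomial_maximum])
  finally show ?thesis .
qed

theorem sperner:
  assumes "finite S" and "F \<subseteq> Pow S"
    and antichain: "\<And>A B. A \<in> F \<Longrightarrow> B \<in> F \<Longrightarrow> A \<subseteq> B \<Longrightarrow> A = B"
  shows "card F \<le> card S choose (card S div 2)"
proof -
  let ?n = "card S" and ?M = "card S choose (card S div 2)"
  let ?P = "permutations_listing_first S"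
  have "finite F" using assms by (meson finite_Pow_iff finite_subset)
  have "card F * fact ?n = (\<Sum>A\<in>F. fact ?n)" by simp
  also have "\<dots> \<le> (\<Sum>A\<in>F. ?M * card (?P A))"
    using assms
    by (intro sum_mono fact_le_middle_binomial_mult_card_permutations_listing_first) auto
  also have "\<dots> = ?M * card (\<Union>A\<in>F. ?P A)"
  proof -
    have "finite (?P A)" for A by (simp add: permutations_listing_first_def)
    moreover have "?P A \<inter> ?P B = {}" if "A \<in> F" "B \<in> F" "A \<noteq> B" for A B
      using that antichain by (intro permutations_listing_first_disjoint) blast+
    ultimately show ?thesis
      using \<open>finite F\<close> by (simp add: card_UN_disjoint sum_distrib_left)
  qed
  also have "\<dots> \<le> ?M * fact ?n"
  proof -
    have "(\<Union>A\<in>F. ?P A) \<subseteq> permutations_of_set S"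
      by (auto simp: permutations_listing_first_def)
    then have "card (\<Union>A\<in>F. ?P A) \<le> fact ?n"
      using \<open>finite S\<close> by (metis card_mono card_permutations_of_set finite_permutations_of_set)
    then show ?thesis by simp
  qed
  finally show ?thesis by simp
qed
theorem proposition6p2:
  fixes k :: nat
  assumes "k \<ge> 2"
  shows "card {\<Pi>. minimal_unavoidable k \<Pi>} \<le> (fact k) choose (fact k div 2)"
proof -
  have perms_k: "perms k = permutations_of_set {1..k}"
    by (auto simp: perms_def permutations_of_set_def)
  have "card {\<Pi>. minimal_unavoidable k \<Pi>} \<le> card (perms k) choose (card (perms k) div 2)"
    by (rule sperner) (auto simp: perms_k minimal_unavoidable_def)
  then show ?thesis by (simp add: perms_k)
qed

end
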